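(* Let $\mathcal{C}$ be a d-category. A $\mathcal{C}$-language $L$ is regular if and only if (1) the sets $\mathrm{src}(L)$ and $\mathrm{tgt}(L)$ are finite, and (2) ${}_UL_V$ is regular for all $U\in\mathrm{src}(L)$ and $V\in\mathrm{tgt}(L)$.
   Context: A d-category is a small category $\mathcal{C}$ with wide subcategories $\mathcal{C}^+$ (formorphisms) and $\mathcal{C}^-$ (backmorphisms) such that an invertible $\varphi$ is in $\mathcal{C}^+$ iff $\varphi^{-1}\in\mathcal{C}^-$. A $\mathcal{C}$-automaton is a presheaf $X:\mathcal{C}^{op}\to\mathbf{Set}$ with sets of start and accept elements (elements are pairs $(U,x)$, $x\in X[U]$); morphisms preserve them. A linear category is a bipointed d-category isomorphic to a finite (possibly empty) concatenation (gluing $\top$ to $\bot$) of $\mathbf S$ (formorphism $\bot\to\top$), $\mathbf T$ (backmorphism $\top\to\bot$), $\mathbf I$ (inverse pair); a path is a d-functor $\omega:\mathcal I\to\mathcal{C}$ from one; its track object is $\operatorname{colim}_i\mathcal{C}(-,\omega(i))$ with single start element image of $\mathrm{id}_{\omega(\bot)}$ (lying over $\mathrm{src}=\omega(\bot)$) and single accept element image of $\mathrm{id}_{\omega(\top)}$ (over $\mathrm{tgt}=\omega(\top)$); track objects are automata isomorphic to such. $\Delta\sqsubseteq\Gamma$ if there is an automaton morphism $\Delta\to\Gamma$. A $\mathcal{C}$-language is a class of track objects down-closed under $\sqsubseteq$. $\mathrm{Lang}(X)$ is the class of track objects admitting an automaton morphism to $X$. A presheaf $X$ is finitely generated if $X\cong\operatorname{colim}_{e\in\mathcal{E}}\mathcal{C}(-,G(e))$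 for some finite category $\mathcal{E}$ and functor $G:\mathcal{E}\to\mathcal{C}$; an automaton has finite type if its presheaf is finitely generated and it has finitely many start and accept elements. $L$ is regular if $L=\mathrm{Lang}(X)$ for some finite-type automaton $X$. $\mathrm{src}(L)=\{\mathrm{src}\Gamma\mid\Gamma\in L\}$, $\mathrm{tgt}(L)=\{\mathrm{tgt}\Gamma\mid\Gamma\in L\}$, ${}_UL_V=\{\Gamma\in L\mid\mathrm{src}\Gamma=U,\mathrm{tgt}\Gamma=V\}$. *)

theory Defs
  imports Main
begin

record ('o,'m) cat =
  obs  :: "'o set"
  mors :: "'m set"
  dm   :: "'m \<Rightarrow> 'o"
  cd   :: "'m \<Rightarrow> 'o"
  cmp  :: "'m \<Rightarrow> 'm \<Rightarrow> 'm"   (* cmp C g f = g o f *)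
  idt  :: "'o \<Rightarrow> 'm"

record ('o,'m) dcat = "('o,'m) cat" +
  fwd :: "'m set"
  bwd :: "'m set"

definition hom :: "('o,'m,'z) cat_scheme \<Rightarrow> 'o \<Rightarrow> 'o \<Rightarrow> 'm set" where
  "hom C U V = {f \<in> mors C. dm C f = U \<and> cd C f = V}"

definition is_cat :: "('o,'m,'z) cat_scheme \<Rightarrow> bool" where
  "is_cat C \<longleftrightarrow>
     (\<forall>f\<in>mors C. dm C f \<in> obs C \<and> cd C f \<in> obs C) \<and>
     (\<forall>U\<in>obs C. idt C U \<in> hom C U U) \<and>
     (\<forall>f\<in>mors C. \<forall>g\<in>mors C. dm C g = cd C f \<longrightarrow> cmp C g f \<in> hom C (dm C f) (cd C g)) \<and>
     (\<forall>f\<in>mors C. cmp C f (idt C (dm C f)) = f \<and> cmp C (idt C (cd C f)) f = f) \<and>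
     (\<forall>f\<in>mors C. \<forall>g\<in>mors C. \<forall>h\<in>mors C. dm C g = cd C f \<longrightarrow> dm C h = cd C g \<longrightarrow>
        cmp C h (cmp C g f) = cmp C (cmp C h g) f)"

definition inverse_pair :: "('o,'m,'z) cat_scheme \<Rightarrow> 'm \<Rightarrow> 'm \<Rightarrow> bool" where
  "inverse_pair C f g \<longleftrightarrow> f \<in> mors C \<and> g \<in> mors C \<and> dm C g = cd C f \<and> cd C g = dm C f \<and>
     cmp C g f = idt C (dm C f) \<and> cmp C f g = idt C (cd C f)"

definition wide_subcat :: "('o,'m,'z) cat_scheme \<Rightarrow> 'm set \<Rightarrow> bool" where
  "wide_subcat C S \<longleftrightarrow> S \<subseteq> mors C \<and> (\<forall>U\<in>obs C. idt C U \<in> S) \<and>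
     (\<forall>f\<in>S. \<forall>g\<in>S. dm C g = cd C f \<longrightarrow> cmp C g f \<in> S)"

definition is_dcat :: "('o,'m,'z) dcat_scheme \<Rightarrow> bool" where
  "is_dcat C \<longleftrightarrow> is_cat C \<and> wide_subcat C (fwd C) \<and> wide_subcat C (bwd C) \<and>
     (\<forall>f g. inverse_pair C f g \<longrightarrow> (f \<in> fwd C \<longleftrightarrow> g \<in> bwd C))"

definition is_functor :: "(nat,nat,'z) cat_scheme \<Rightarrow> ('o,'m,'y) cat_scheme \<Rightarrow>
    (nat \<Rightarrow> 'o) \<Rightarrow> (nat \<Rightarrow> 'm) \<Rightarrow> bool" where
  "is_functor E C Gob Gmor \<longleftrightarrow>
     (\<forall>e\<in>obs E. Gob e \<in> obs C) \<and>
     (\<forall>a\<in>mors E. Gmor a \<in> hom C (Gob (dm E a)) (Gob (cd E a))) \<and>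
     (\<forall>e\<in>obs E. Gmor (idt E e) = idt C (Gob e)) \<and>
     (\<forall>a\<in>mors E. \<forall>b\<in>mors E. dm E b = cd E a \<longrightarrow> Gmor (cmp E b a) = cmp C (Gmor b) (Gmor a))"

(* A presheaf X : C^op -> Set: X[U] = Xs X U, and act X f : X[cd f] -> X[dm f]. *)
record ('o,'m,'x) aut =
  Xs  :: "'o \<Rightarrow> 'x set"
  act :: "'m \<Rightarrow> 'x \<Rightarrow> 'x"
  st  :: "('o \<times> 'x) set"   (* start elements *)
  ac  :: "('o \<times> 'x) set"   (* accept elements *)

definition elems :: "('o,'m,'x) aut \<Rightarrow> ('o \<times> 'x) set" where
  "elems X = {(U,x). x \<in> Xs X U}"

definition is_presheaf :: "('o,'m,'z) cat_scheme \<Rightarrow> ('o,'m,'x) aut \<Rightarrow> bool" where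
  "is_presheaf C X \<longleftrightarrow>
     (\<forall>U. U \<notin> obs C \<longrightarrow> Xs X U = {}) \<and>
     (\<forall>f\<in>mors C. \<forall>x\<in>Xs X (cd C f). act X f x \<in> Xs X (dm C f)) \<and>
     (\<forall>U\<in>obs C. \<forall>x\<in>Xs X U. act X (idt C U) x = x) \<and>
     (\<forall>f\<in>mors C. \<forall>g\<in>mors C. dm C g = cd C f \<longrightarrow>
        (\<forall>x\<in>Xs X (cd C g). act X (cmp C g f) x = act X f (act X g x)))"

definition is_automaton :: "('o,'m,'z) cat_scheme \<Rightarrow> ('o,'m,'x) aut \<Rightarrow> bool" where
  "is_automaton C X \<longleftrightarrow> is_presheaf C X \<and> st X \<subseteq> elems X \<and> ac X \<subseteq> elems X"

definition psh_hom :: "('o,'m,'z) cat_scheme \<Rightarrow> ('o,'m,'x) aut \<Rightarrow> ('o,'m,'y) aut \<Rightarrow>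
    ('o \<Rightarrow> 'x \<Rightarrow> 'y) \<Rightarrow> bool" where
  "psh_hom C X Y \<eta> \<longleftrightarrow>
     (\<forall>U x. x \<in> Xs X U \<longrightarrow> \<eta> U x \<in> Xs Y U) \<and>
     (\<forall>f\<in>mors C. \<forall>x\<in>Xs X (cd C f). \<eta> (dm C f) (act X f x) = act Y f (\<eta> (cd C f) x))"

definition psh_iso :: "('o,'m,'z) cat_scheme \<Rightarrow> ('o,'m,'x) aut \<Rightarrow> ('o,'m,'y) aut \<Rightarrow> bool" where
  "psh_iso C X Y \<longleftrightarrow> (\<exists>\<eta> \<theta>. psh_hom C X Y \<eta> \<and> psh_hom C Y X \<theta> \<and>
     (\<forall>U x. x \<in> Xs X U \<longrightarrow> \<theta> U (\<eta> U x) = x) \<and>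
     (\<forall>U y. y \<in> Xs Y U \<longrightarrow> \<eta> U (\<theta> U y) = y))"

definition aut_hom :: "('o,'m,'z) cat_scheme \<Rightarrow> ('o,'m,'x) aut \<Rightarrow> ('o,'m,'y) aut \<Rightarrow>
    ('o \<Rightarrow> 'x \<Rightarrow> 'y) \<Rightarrow> bool" where
  "aut_hom C X Y \<eta> \<longleftrightarrow> psh_hom C X Y \<eta> \<and>
     (\<forall>(U,x)\<in>st X. (U, \<eta> U x) \<in> st Y) \<and>
     (\<forall>(U,x)\<in>ac X. (U, \<eta> U x) \<in> ac Y)"

definition aut_le :: "('o,'m,'z) cat_scheme \<Rightarrow> ('o,'m,'x) aut \<Rightarrow> ('o,'m,'y) aut \<Rightarrow> bool" where
  "aut_le C X Y \<longleftrightarrow> (\<exists>\<eta>. aut_hom C X Y \<eta>)"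

definition aut_iso :: "('o,'m,'z) cat_scheme \<Rightarrow> ('o,'m,'x) aut \<Rightarrow> ('o,'m,'y) aut \<Rightarrow> bool" where
  "aut_iso C X Y \<longleftrightarrow> (\<exists>\<eta> \<theta>. aut_hom C X Y \<eta> \<and> aut_hom C Y X \<theta> \<and>
     (\<forall>U x. x \<in> Xs X U \<longrightarrow> \<theta> U (\<eta> U x) = x) \<and>
     (\<forall>U y. y \<in> Xs Y U \<longrightarrow> \<eta> U (\<theta> U y) = y))"

(* A diagram of representables: index objects DJ, index arrows DA (a : Ds a -> Dt a),
   object part Dob and arrow part Dmor. *)
record ('o,'m) diagram =
  DJ   :: "nat set"
  DA   :: "nat set"
  Ds   :: "nat \<Rightarrow> nat"
  Dt   :: "nat \<Rightarrow> nat"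
  Dob  :: "nat \<Rightarrow> 'o"
  Dmor :: "nat \<Rightarrow> 'm"

definition colim_dom :: "('o,'m,'z) cat_scheme \<Rightarrow> ('o,'m) diagram \<Rightarrow> 'o \<Rightarrow> (nat \<times> 'm) set" where
  "colim_dom C D U = {(j,h). j \<in> DJ D \<and> h \<in> hom C U (Dob D j)}"

definition colim_step :: "('o,'m,'z) cat_scheme \<Rightarrow> ('o,'m) diagram \<Rightarrow> 'o \<Rightarrow> ((nat \<times> 'm) \<times> (nat \<times> 'm)) set" where
  "colim_step C D U = {((Ds D a, h), (Dt D a, cmp C (Dmor D a) h)) | a h.
      a \<in> DA D \<and> h \<in> hom C U (Dob D (Ds D a))}"

definition colim_eq :: "('o,'m,'z) cat_scheme \<Rightarrow> ('o,'m) diagram \<Rightarrow> 'o \<Rightarrow> ((nat \<times> 'm) \<times> (nat \<times> 'm)) set" where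
  "colim_eq C D U = ((colim_step C D U \<union> (colim_step C D U)\<inverse>)\<^sup>*) \<inter> (colim_dom C D U \<times> colim_dom C D U)"

(* colim_j C(-, D j), computed pointwise in Set *)
definition colim :: "('o,'m,'z) cat_scheme \<Rightarrow> ('o,'m) diagram \<Rightarrow> ('o,'m,(nat \<times> 'm) set) aut" where
  "colim C D = \<lparr> Xs = (\<lambda>U. if U \<in> obs C then colim_dom C D U // colim_eq C D U else {}),
      act = (\<lambda>f c. colim_eq C D (dm C f) `` {(fst (SOME p. p \<in> c), cmp C (snd (SOME p. p \<in> c)) f)}),
      st = {}, ac = {} \<rparr>"

definition functor_diagram :: "(nat,nat,'z) cat_scheme \<Rightarrow> (nat \<Rightarrow> 'o) \<Rightarrow> (nat \<Rightarrow> 'm) \<Rightarrow> ('o,'m) diagram" where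
  "functor_diagram E Gob Gmor = \<lparr> DJ = obs E, DA = mors E, Ds = dm E, Dt = cd E, Dob = Gob, Dmor = Gmor \<rparr>"

definition fin_gen :: "('o,'m,'z) cat_scheme \<Rightarrow> ('o,'m,'x) aut \<Rightarrow> bool" where
  "fin_gen C X \<longleftrightarrow> (\<exists>(E :: (nat,nat) cat) Gob Gmor. is_cat E \<and> finite (obs E) \<and> finite (mors E) \<and>
      is_functor E C Gob Gmor \<and> psh_iso C X (colim C (functor_diagram E Gob Gmor)))"

definition finite_type :: "('o,'m,'z) cat_scheme \<Rightarrow> ('o,'m,'x) aut \<Rightarrow> bool" where
  "finite_type C X \<longleftrightarrow> is_automaton C X \<and> fin_gen C X \<and> finite (st X) \<and> finite (ac X)"

(* Pieces of a linear category: S (formorphism bot->top), T (backmorphism top->bot),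
   I (inverse pair: formorphism bot->top with inverse backmorphism top->bot).
   A path is given by the images of the gluing objects and of the generating arrows. *)
datatype 'm pstep = PS 'm | PT 'm | PI 'm

definition is_path :: "('o,'m,'z) dcat_scheme \<Rightarrow> 'o list \<Rightarrow> 'm pstep list \<Rightarrow> bool" where
  "is_path C ws ss \<longleftrightarrow> length ws = Suc (length ss) \<and> set ws \<subseteq> obs C \<and>
     (\<forall>k<length ss. case ss ! k of
         PS f \<Rightarrow> f \<in> fwd C \<and> f \<in> hom C (ws ! k) (ws ! Suc k)
       | PT f \<Rightarrow> f \<in> bwd C \<and> f \<in> hom C (ws ! Suc k) (ws ! k)
       | PI f \<Rightarrow> f \<in> fwd C \<and> f \<in> hom C (ws ! k) (ws ! Suc k) \<and>
                 (\<exists>g. g \<in> bwd C \<and> inverse_pair C f g))"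

definition step_mor :: "'m pstep \<Rightarrow> 'm" where
  "step_mor s = (case s of PS f \<Rightarrow> f | PT f \<Rightarrow> f | PI f \<Rightarrow> f)"

definition path_diagram :: "'o list \<Rightarrow> 'm pstep list \<Rightarrow> ('o,'m) diagram" where
  "path_diagram ws ss = \<lparr> DJ = {0..length ss}, DA = {0..<length ss},
      Ds = (\<lambda>k. case ss ! k of PT _ \<Rightarrow> Suc k | _ \<Rightarrow> k),
      Dt = (\<lambda>k. case ss ! k of PT _ \<Rightarrow> k | _ \<Rightarrow> Suc k),
      Dob = (\<lambda>i. ws ! i), Dmor = (\<lambda>k. step_mor (ss ! k)) \<rparr>"

definition track :: "('o,'m,'z) dcat_scheme \<Rightarrow> 'o list \<Rightarrow> 'm pstep list \<Rightarrow> ('o,'m,(nat \<times> 'm) set) aut" where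
  "track C ws ss = (let D = path_diagram ws ss; X = colim C D in
     X \<lparr> st := {(hd ws, colim_eq C D (hd ws) `` {(0, idt C (hd ws))})},
         ac := {(last ws, colim_eq C D (last ws) `` {(length ss, idt C (last ws))})} \<rparr>)"

definition track_object :: "('o,'m,'z) dcat_scheme \<Rightarrow> ('o,'m,'x) aut \<Rightarrow> bool" where
  "track_object C G \<longleftrightarrow> is_automaton C G \<and> (\<exists>ws ss. is_path C ws ss \<and> aut_iso C G (track C ws ss))"

(* Languages are represented as sets of track objects with carrier type (nat x 'm) set,
   which is large enough to contain an isomorphic copy of every track object. *)
type_synonym ('o,'m) tobj = "('o,'m,(nat \<times> 'm) set) aut"

definition is_language :: "('o,'m,'z) dcat_scheme \<Rightarrow> ('o,'m) tobj set \<Rightarrow> bool" where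
  "is_language C L \<longleftrightarrow> (\<forall>G\<in>L. track_object C G) \<and>
     (\<forall>G\<in>L. \<forall>D. track_object C D \<and> aut_le C D G \<longrightarrow> D \<in> L)"

definition Lang :: "('o,'m,'z) dcat_scheme \<Rightarrow> ('o,'m,'x) aut \<Rightarrow> ('o,'m) tobj set" where
  "Lang C X = {G. track_object C G \<and> aut_le C G X}"

definition regular :: "('o,'m,'z) dcat_scheme \<Rightarrow> ('o,'m) tobj set \<Rightarrow> bool" where
  "regular C L \<longleftrightarrow> (\<exists>X :: ('o,'m) tobj. finite_type C X \<and> L = Lang C X)"

definition src :: "('o,'m,'x) aut \<Rightarrow> 'o" where
  "src G = fst (THE e. e \<in> st G)"

definition tgt :: "('o,'m,'x) aut \<Rightarrow> 'o" where
  "tgt G = fst (THE e. e \<in> ac G)"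

definition sub_lang :: "('o,'m) tobj set \<Rightarrow> 'o \<Rightarrow> 'o \<Rightarrow> ('o,'m) tobj set" where
  "sub_lang L U V = {G \<in> L. src G = U \<and> tgt G = V}"

end

theory Submission
  imports Defs
begin

text \<open>Regular languages are closed under finite unions and under restricting the start and accept
  objects; as \<open>L\<close> is the union of the pieces \<open>\<^sub>UL\<^sub>V\<close>, this gives both directions, the finiteness of
  \<open>src(L)\<close> and \<open>tgt(L)\<close> coming from the finitely many start and accept elements of an automaton.
  Restriction just shrinks those sets of elements. For a union, the coproduct \<open>X\<^sub>1 + X\<^sub>2\<close> is again of
  finite type, being the colimit over the coproduct of the two index categories, and a morphism from
  a track object into it lands in a single summand: track objects are connected, since every
  element arises from a generator of the path and consecutive generators are related by the
  path's arrows.\<close>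

lemma homD: "f \<in> hom C U V \<Longrightarrow> f \<in> mors C \<and> dm C f = U \<and> cd C f = V"
  by (simp add: hom_def)

lemma mors_in_hom: "f \<in> mors C \<Longrightarrow> f \<in> hom C (dm C f) (cd C f)"
  by (simp add: hom_def)

lemma hom_comp: "is_cat C \<Longrightarrow> f \<in> hom C U V \<Longrightarrow> g \<in> hom C V W \<Longrightarrow> cmp C g f \<in> hom C U W"
  unfolding is_cat_def hom_def by auto

lemma cmp_assoc: "is_cat C \<Longrightarrow> f \<in> hom C U V \<Longrightarrow> g \<in> hom C V W \<Longrightarrow> h \<in> hom C W Z \<Longrightarrow>
    cmp C h (cmp C g f) = cmp C (cmp C h g) f"
  unfolding is_cat_def hom_def by auto

lemma idt_in_hom: "is_cat C \<Longrightarrow> U \<in> obs C \<Longrightarrow> idt C U \<in> hom C U U"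
  unfolding is_cat_def by auto

lemma cmp_idt_left: "is_cat C \<Longrightarrow> f \<in> hom C U V \<Longrightarrow> cmp C (idt C V) f = f"
  unfolding is_cat_def hom_def by auto

lemma cmp_idt_right: "is_cat C \<Longrightarrow> f \<in> hom C U V \<Longrightarrow> cmp C f (idt C U) = f"
  unfolding is_cat_def hom_def by auto

lemma hom_obs: "is_cat C \<Longrightarrow> f \<in> hom C U V \<Longrightarrow> U \<in> obs C \<and> V \<in> obs C"
  unfolding is_cat_def hom_def by auto

lemma presheaf_act_in: "is_presheaf C X \<Longrightarrow> f \<in> mors C \<Longrightarrow> x \<in> Xs X (cd C f) \<Longrightarrow>
    act X f x \<in> Xs X (dm C f)"
  unfolding is_presheaf_def by blast

lemma psh_hom_comp:
  "psh_hom C X Y \<eta> \<Longrightarrow> psh_hom C Y Z \<zeta> \<Longrightarrow> psh_hom C X Z (\<lambda>U x. \<zeta> U (\<eta> U x))"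
  unfolding psh_hom_def by auto

section \<open>Colimits of representables\<close>

definition wf_diagram :: "('o,'m,'z) cat_scheme \<Rightarrow> ('o,'m) diagram \<Rightarrow> bool" where
  "wf_diagram C D \<longleftrightarrow> (\<forall>a\<in>DA D. Ds D a \<in> DJ D \<and> Dt D a \<in> DJ D \<and>
      Dmor D a \<in> hom C (Dob D (Ds D a)) (Dob D (Dt D a)))"

text \<open>The action of \<open>f\<close> on representatives \<open>(j, h)\<close> of the colimit.\<close>

definition precomp :: "('o,'m,'z) cat_scheme \<Rightarrow> nat \<times> 'm \<Rightarrow> 'm \<Rightarrow> nat \<times> 'm" where
  "precomp C x f = (fst x, cmp C (snd x) f)"

abbreviation colim_sym_step :: "('o,'m,'z) cat_scheme \<Rightarrow> ('o,'m) diagram \<Rightarrow> 'o \<Rightarrow>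
    ((nat \<times> 'm) \<times> (nat \<times> 'm)) set" where
  "colim_sym_step C D U \<equiv> colim_step C D U \<union> (colim_step C D U)\<inverse>"

lemma colim_step_subset_dom:
  assumes "wf_diagram C D" "is_cat C"
  shows "colim_step C D U \<subseteq> colim_dom C D U \<times> colim_dom C D U"
  using assms unfolding wf_diagram_def colim_step_def colim_dom_def
  by (auto intro: hom_comp)

lemma equiv_colim_eq:
  assumes "wf_diagram C D" "is_cat C"
  shows "equiv (colim_dom C D U) (colim_eq C D U)"
proof (rule equivI)
  show "colim_eq C D U \<subseteq> colim_dom C D U \<times> colim_dom C D U"
    unfolding colim_eq_def by auto
  show "refl_on (colim_dom C D U) (colim_eq C D U)"
    unfolding colim_eq_def refl_on_def by auto
  show "sym (colim_eq C D U)"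
    unfolding colim_eq_def sym_def
    by (metis (no_types, lifting) IntD1 IntD2 IntI converse_Un converse_converse converse_iff
        mem_Sigma_iff rtrancl_converse sup_commute)
  show "trans (colim_eq C D U)"
    unfolding colim_eq_def trans_def by auto
qed

lemma colim_step_precomp:
  assumes "wf_diagram C D" "is_cat C" "f \<in> hom C U V" "(y, z) \<in> colim_step C D V"
  shows "(precomp C y f, precomp C z f) \<in> colim_step C D U"
proof -
  from assms(4) obtain a h where a: "a \<in> DA D" "h \<in> hom C V (Dob D (Ds D a))"
    "y = (Ds D a, h)" "z = (Dt D a, cmp C (Dmor D a) h)"
    unfolding colim_step_def by blast
  have "Dmor D a \<in> hom C (Dob D (Ds D a)) (Dob D (Dt D a))"
    using assms(1) a(1) unfolding wf_diagram_def by auto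
  then have "cmp C (cmp C (Dmor D a) h) f = cmp C (Dmor D a) (cmp C h f)"
    using cmp_assoc[OF assms(2,3) a(2)] by simp
  then show ?thesis
    using a hom_comp[OF assms(2,3) a(2)] unfolding colim_step_def precomp_def by auto
qed

lemma colim_sym_step_rtrancl_precomp:
  assumes "wf_diagram C D" "is_cat C" "f \<in> hom C U V" "(y, z) \<in> (colim_sym_step C D V)\<^sup>*"
  shows "(precomp C y f, precomp C z f) \<in> (colim_sym_step C D U)\<^sup>*"
  using assms(4)
proof (induction rule: rtrancl_induct)
  case (step z w)
  then have "(precomp C z f, precomp C w f) \<in> colim_sym_step C D U"
    using colim_step_precomp[OF assms(1,2,3)] by blast
  with step.IH show ?case by (rule rtrancl_into_rtrancl)
qed simp

lemma precomp_in_colim_dom: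
  assumes "is_cat C" "f \<in> hom C U V" "x \<in> colim_dom C D V"
  shows "precomp C x f \<in> colim_dom C D U"
  using assms hom_comp[OF assms(1,2)] unfolding colim_dom_def precomp_def by auto

lemma colim_eq_precomp:
  assumes "wf_diagram C D" "is_cat C" "f \<in> hom C U V" "(y, z) \<in> colim_eq C D V"
  shows "(precomp C y f, precomp C z f) \<in> colim_eq C D U"
  using assms colim_sym_step_rtrancl_precomp[OF assms(1,2,3)] precomp_in_colim_dom[OF assms(2,3)]
  unfolding colim_eq_def by auto

lemma Xs_colim: "Xs (colim C D) U = (if U \<in> obs C then colim_dom C D U // colim_eq C D U else {})"
  by (simp add: colim_def)

lemma Xs_colimE:
  assumes "c \<in> Xs (colim C D) U"
  obtains x where "U \<in> obs C" "x \<in> colim_dom C D U" "c = colim_eq C D U `` {x}"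
  using assms by (auto simp: Xs_colim split: if_splits elim: quotientE)

lemma class_in_Xs_colim:
  "U \<in> obs C \<Longrightarrow> x \<in> colim_dom C D U \<Longrightarrow> colim_eq C D U `` {x} \<in> Xs (colim C D) U"
  by (simp add: Xs_colim quotientI)

lemma Xs_colim_nonempty:
  assumes "wf_diagram C D" "is_cat C" "c \<in> Xs (colim C D) U"
  shows "c \<noteq> {}"
proof -
  obtain x where "x \<in> colim_dom C D U" "c = colim_eq C D U `` {x}"
    using assms(3) by (auto elim: Xs_colimE)
  then show ?thesis using equiv_class_self[OF equiv_colim_eq[OF assms(1,2)]] by blast
qed

text \<open>The action of \<open>colim\<close> picks a representative with \<open>SOME\<close>; it is well defined on classes.\<close>

lemma act_colim_class:
  assumes "wf_diagram C D" "is_cat C" "x \<in> colim_dom C D V" "f \<in> hom C U V"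
  shows "act (colim C D) f (colim_eq C D V `` {x}) = colim_eq C D U `` {precomp C x f}"
proof -
  let ?c = "colim_eq C D V `` {x}"
  have eqv: "equiv (colim_dom C D V) (colim_eq C D V)" "equiv (colim_dom C D U) (colim_eq C D U)"
    using equiv_colim_eq[OF assms(1,2)] by auto
  have "x \<in> ?c" using equiv_class_self[OF eqv(1) assms(3)] .
  then have "(x, SOME p. p \<in> ?c) \<in> colim_eq C D V" by (metis Image_singleton_iff someI)
  then have "(precomp C x f, precomp C (SOME p. p \<in> ?c) f) \<in> colim_eq C D U"
    by (rule colim_eq_precomp[OF assms(1,2,4)])
  then have "colim_eq C D U `` {precomp C x f} = colim_eq C D U `` {precomp C (SOME p. p \<in> ?c) f}"
    by (rule equiv_class_eq[OF eqv(2)])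
  then show ?thesis using assms(4) by (simp add: colim_def precomp_def homD)
qed

lemma is_presheaf_colim:
  assumes "wf_diagram C D" "is_cat C"
  shows "is_presheaf C (colim C D)"
  unfolding is_presheaf_def
proof (intro conjI ballI allI impI)
  fix U assume "U \<notin> obs C" then show "Xs (colim C D) U = {}" by (simp add: Xs_colim)
next
  fix f x assume f: "f \<in> mors C" and x: "x \<in> Xs (colim C D) (cd C f)"
  from x obtain y where y: "y \<in> colim_dom C D (cd C f)" "x = colim_eq C D (cd C f) `` {y}"
    by (auto elim: Xs_colimE)
  show "act (colim C D) f x \<in> Xs (colim C D) (dm C f)"
    using act_colim_class[OF assms y(1) mors_in_hom[OF f]]
      precomp_in_colim_dom[OF assms(2) mors_in_hom[OF f] y(1)] hom_obs[OF assms(2) mors_in_hom[OF f]]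
    by (simp add: y(2) class_in_Xs_colim)
next
  fix U x assume U: "U \<in> obs C" and x: "x \<in> Xs (colim C D) U"
  from x obtain y where y: "y \<in> colim_dom C D U" "x = colim_eq C D U `` {y}"
    by (auto elim: Xs_colimE)
  have "precomp C y (idt C U) = y"
    using y(1) cmp_idt_right[OF assms(2)] unfolding precomp_def colim_dom_def by auto
  then show "act (colim C D) (idt C U) x = x"
    using act_colim_class[OF assms y(1) idt_in_hom[OF assms(2) U]] y(2) by simp
next
  fix f g x assume f: "f \<in> mors C" and g: "g \<in> mors C" and e: "dm C g = cd C f"
    and x: "x \<in> Xs (colim C D) (cd C g)"
  have fh: "f \<in> hom C (dm C f) (cd C f)" using f by (simp add: hom_def)
  have gh: "g \<in> hom C (cd C f) (cd C g)" using g e by (simp add: hom_def)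
  from x obtain y where y: "y \<in> colim_dom C D (cd C g)" "x = colim_eq C D (cd C g) `` {y}"
    by (auto elim: Xs_colimE)
  have "snd y \<in> hom C (cd C g) (Dob D (fst y))" using y(1) unfolding colim_dom_def by auto
  then have "precomp C y (cmp C g f) = precomp C (precomp C y g) f"
    using cmp_assoc[OF assms(2) fh gh] unfolding precomp_def by simp
  then show "act (colim C D) (cmp C g f) x = act (colim C D) f (act (colim C D) g x)"
    using act_colim_class[OF assms y(1) hom_comp[OF assms(2) fh gh]] act_colim_class[OF assms y(1) gh]
      act_colim_class[OF assms precomp_in_colim_dom[OF assms(2) gh y(1)] fh] y(2) by simp
qed

section \<open>Track objects are connected\<close>

lemma wf_path_diagram:
  assumes "is_path C ws ss"
  shows "wf_diagram C (path_diagram ws ss)"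
  unfolding wf_diagram_def path_diagram_def
proof (intro ballI conjI, simp_all)
  fix a assume a: "a < length ss"
  show "(case ss ! a of PT x \<Rightarrow> Suc a | _ \<Rightarrow> a) \<le> length ss"
    "(case ss ! a of PT x \<Rightarrow> a | _ \<Rightarrow> Suc a) \<le> length ss"
    using a by (cases "ss ! a"; simp)+
  show "step_mor (ss ! a) \<in> hom C (ws ! (case ss ! a of PT x \<Rightarrow> Suc a | _ \<Rightarrow> a))
          (ws ! (case ss ! a of PT x \<Rightarrow> a | _ \<Rightarrow> Suc a))"
    using assms a unfolding is_path_def
    by (cases "ss ! a") (auto simp: step_mor_def dest!: spec[of _ a])
qed

lemma path_diagram_simps [simp]:
  "DJ (path_diagram ws ss) = {0..length ss}" "DA (path_diagram ws ss) = {0..<length ss}"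
  "Dob (path_diagram ws ss) j = ws ! j"
  by (simp_all add: path_diagram_def)

lemma path_diagram_ends:
  "(Ds (path_diagram ws ss) k = k \<and> Dt (path_diagram ws ss) k = Suc k) \<or>
   (Ds (path_diagram ws ss) k = Suc k \<and> Dt (path_diagram ws ss) k = k)"
  by (cases "ss ! k") (simp_all add: path_diagram_def)

lemma track_simps:
  "Xs (track C ws ss) = Xs (colim C (path_diagram ws ss))"
  "act (track C ws ss) = act (colim C (path_diagram ws ss))"
  "st (track C ws ss) = {(hd ws, colim_eq C (path_diagram ws ss) (hd ws) `` {(0, idt C (hd ws))})}"
  "ac (track C ws ss) =
     {(last ws, colim_eq C (path_diagram ws ss) (last ws) `` {(length ss, idt C (last ws))})}"
  by (simp_all add: track_def Let_def colim_def)

text \<open>The image of \<open>id\<^bsub>\<omega>(j)\<^esub>\<close> under the \<open>j\<close>-th colimit injection.\<close>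

definition track_gen :: "('o,'m,'z) dcat_scheme \<Rightarrow> 'o list \<Rightarrow> 'm pstep list \<Rightarrow> nat \<Rightarrow> (nat \<times> 'm) set" where
  "track_gen C ws ss j = colim_eq C (path_diagram ws ss) (ws ! j) `` {(j, idt C (ws ! j))}"

lemma path_obs: "is_path C ws ss \<Longrightarrow> j \<le> length ss \<Longrightarrow> ws ! j \<in> obs C"
  unfolding is_path_def by auto

lemma path_hd_last: "is_path C ws ss \<Longrightarrow> hd ws = ws ! 0 \<and> last ws = ws ! length ss"
proof -
  assume "is_path C ws ss"
  then have "length ws = Suc (length ss)" by (simp add: is_path_def)
  then show ?thesis by (cases ws) (auto simp: last_conv_nth nth_Cons')
qed

lemma track_gen_in_colim_dom:
  "is_cat C \<Longrightarrow> is_path C ws ss \<Longrightarrow> j \<le> length ss \<Longrightarrow>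
    (j, idt C (ws ! j)) \<in> colim_dom C (path_diagram ws ss) (ws ! j)"
  using idt_in_hom path_obs by (fastforce simp: colim_dom_def)

lemma track_gen_in_Xs:
  "is_cat C \<Longrightarrow> is_path C ws ss \<Longrightarrow> j \<le> length ss \<Longrightarrow> track_gen C ws ss j \<in> Xs (track C ws ss) (ws ! j)"
  unfolding track_simps track_gen_def
  by (intro class_in_Xs_colim path_obs track_gen_in_colim_dom)

lemma act_track_gen:
  assumes "is_cat C" "is_path C ws ss" "j \<le> length ss" "h \<in> hom C V (ws ! j)"
  shows "act (track C ws ss) h (track_gen C ws ss j) = colim_eq C (path_diagram ws ss) V `` {(j, h)}"
  using act_colim_class[OF wf_path_diagram[OF assms(2)] assms(1) track_gen_in_colim_dom[OF assms(1-3)] assms(4)]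
    cmp_idt_left[OF assms(1,4)]
  by (simp add: track_simps track_gen_def precomp_def)

lemma track_elemE:
  assumes "is_cat C" "is_path C ws ss" "t \<in> Xs (track C ws ss) U"
  obtains j h where "j \<le> length ss" "h \<in> hom C U (ws ! j)" "t = act (track C ws ss) h (track_gen C ws ss j)"
proof -
  obtain x where x: "x \<in> colim_dom C (path_diagram ws ss) U" "t = colim_eq C (path_diagram ws ss) U `` {x}"
    using assms(3) by (auto simp: track_simps elim: Xs_colimE)
  then obtain j h where "x = (j, h)" "j \<le> length ss" "h \<in> hom C U (ws ! j)"
    by (auto simp: colim_dom_def)
  then show thesis using that act_track_gen[OF assms(1,2)] x(2) by simp
qed

lemma track_gen_adjacent:
  assumes "is_cat C" "is_path C ws ss" "k < length ss"
  obtains s t f where "{s, t} = {k, Suc k}" "f \<in> hom C (ws ! s) (ws ! t)"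
    "track_gen C ws ss s = act (track C ws ss) f (track_gen C ws ss t)"
proof -
  define D where "D = path_diagram ws ss"
  let ?s = "Ds D k" and ?t = "Dt D k" and ?f = "Dmor D k"
  have wf: "wf_diagram C D" using wf_path_diagram[OF assms(2)] by (simp add: D_def)
  have k: "k \<in> DA D" using assms(3) by (simp add: D_def)
  have st: "?s \<le> length ss" "?t \<le> length ss" "?f \<in> hom C (ws ! ?s) (ws ! ?t)"
    using wf k unfolding wf_diagram_def by (auto simp: D_def)
  have "((?s, idt C (ws ! ?s)), (?t, cmp C ?f (idt C (ws ! ?s)))) \<in> colim_step C D (ws ! ?s)"
    unfolding colim_step_def using k idt_in_hom[OF assms(1) path_obs[OF assms(2) st(1)]]
    by (auto simp: D_def)
  then have "((?s, idt C (ws ! ?s)), (?t, ?f)) \<in> colim_eq C D (ws ! ?s)"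
    using colim_step_subset_dom[OF wf assms(1)] cmp_idt_right[OF assms(1) st(3)]
    unfolding colim_eq_def by auto
  then have "track_gen C ws ss ?s = colim_eq C D (ws ! ?s) `` {(?t, ?f)}"
    unfolding track_gen_def D_def[symmetric] by (rule equiv_class_eq[OF equiv_colim_eq[OF wf assms(1)]])
  also have "\<dots> = act (track C ws ss) ?f (track_gen C ws ss ?t)"
    using act_track_gen[OF assms(1,2) st(2,3)] by (simp add: D_def)
  finally show thesis
    using that[OF _ st(3)] path_diagram_ends[of ws ss k] by (auto simp: D_def insert_commute)
qed

definition act_stable :: "('o,'m,'z) cat_scheme \<Rightarrow> ('o,'m,'x) aut \<Rightarrow> ('o \<Rightarrow> 'x \<Rightarrow> bool) \<Rightarrow> bool" where
  "act_stable C Y P \<longleftrightarrow> (\<forall>f\<in>mors C. \<forall>y\<in>Xs Y (cd C f). P (dm C f) (act Y f y) \<longleftrightarrow> P (cd C f) y)"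

lemma act_stable_hom:
  assumes "psh_hom C X Y \<psi>" "act_stable C Y P" "h \<in> hom C V W" "x \<in> Xs X W"
  shows "P V (\<psi> V (act X h x)) \<longleftrightarrow> P W (\<psi> W x)"
  using assms unfolding psh_hom_def act_stable_def hom_def by auto

lemma track_connected:
  assumes cat: "is_cat C" and path: "is_path C ws ss"
    and \<psi>: "psh_hom C (track C ws ss) Y \<psi>" and P: "act_stable C Y P"
    and t: "t \<in> Xs (track C ws ss) U"
  shows "P U (\<psi> U t) \<longleftrightarrow> P (ws ! 0) (\<psi> (ws ! 0) (track_gen C ws ss 0))"
proof -
  define Q where "Q j \<longleftrightarrow> P (ws ! j) (\<psi> (ws ! j) (track_gen C ws ss j))" for j
  have Q_step: "Q k \<longleftrightarrow> Q (Suc k)" if k: "k < length ss" for k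
  proof -
    obtain s t f where "{s, t} = {k, Suc k}" "f \<in> hom C (ws ! s) (ws ! t)"
      "track_gen C ws ss s = act (track C ws ss) f (track_gen C ws ss t)"
      using track_gen_adjacent[OF cat path k] .
    moreover have "t \<le> length ss" using \<open>{s, t} = {k, Suc k}\<close> k by (auto simp: doubleton_eq_iff)
    ultimately have "Q s \<longleftrightarrow> Q t"
      unfolding Q_def using act_stable_hom[OF \<psi> P] track_gen_in_Xs[OF cat path] by metis
    then show ?thesis using \<open>{s, t} = {k, Suc k}\<close> by (auto simp: doubleton_eq_iff)
  qed
  have Q_0: "j \<le> length ss \<Longrightarrow> Q j \<longleftrightarrow> Q 0" for j
    by (induction j) (use Q_step in auto)
  obtain j h where j: "j \<le> length ss" "h \<in> hom C U (ws ! j)"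
    "t = act (track C ws ss) h (track_gen C ws ss j)"
    using track_elemE[OF cat path t] .
  have "P U (\<psi> U t) \<longleftrightarrow> Q j"
    unfolding Q_def j(3) using act_stable_hom[OF \<psi> P j(2) track_gen_in_Xs[OF cat path j(1)]] .
  then show ?thesis using Q_0[OF j(1)] by (simp add: Q_def)
qed

lemma singleton_transport:
  assumes "S \<subseteq> elems X" "\<forall>(U, x)\<in>S. (U, \<eta> U x) \<in> S'" "\<forall>(U, y)\<in>S'. (U, \<theta> U y) \<in> S"
    "S' = {(U0, y0)}" "\<forall>U x. x \<in> Xs X U \<longrightarrow> \<theta> U (\<eta> U x) = x"
  shows "S = {(U0, \<theta> U0 y0)}"
proof -
  have "e = (U0, \<theta> U0 y0)" if e: "e \<in> S" for e
  proof (cases e)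
    case (Pair U x)
    have "(U, \<eta> U x) \<in> S'" using assms(2) e Pair by fast
    then have "U = U0 \<and> \<eta> U x = y0" using assms(4) by blast
    moreover have "x \<in> Xs X U" using assms(1) e Pair by (auto simp: elems_def)
    ultimately show ?thesis using assms(5) Pair by auto
  qed
  moreover have "(U0, \<theta> U0 y0) \<in> S" using assms(3,4) by simp
  ultimately show ?thesis by blast
qed

lemma track_objectE:
  assumes "track_object C G"
  obtains ws ss \<theta> where "is_path C ws ss" "psh_hom C (track C ws ss) G \<theta>"
    "st G = {(ws ! 0, \<theta> (ws ! 0) (track_gen C ws ss 0))}"
    "ac G = {(last ws, \<theta> (last ws) (track_gen C ws ss (length ss)))}"
    "\<And>U x. x \<in> Xs G U \<Longrightarrow> \<exists>t\<in>Xs (track C ws ss) U. \<theta> U t = x"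
proof -
  obtain ws ss \<eta> \<theta> where G: "is_automaton C G" "is_path C ws ss"
    "aut_hom C G (track C ws ss) \<eta>" "aut_hom C (track C ws ss) G \<theta>"
    "\<forall>U x. x \<in> Xs G U \<longrightarrow> \<theta> U (\<eta> U x) = x"
    using assms unfolding track_object_def aut_iso_def by blast
  have ends: "hd ws = ws ! 0" "last ws = ws ! length ss" using path_hd_last[OF G(2)] by auto
  show thesis
  proof (rule that[OF G(2)])
    show "psh_hom C (track C ws ss) G \<theta>" using G(4) by (simp add: aut_hom_def)
    show "st G = {(ws ! 0, \<theta> (ws ! 0) (track_gen C ws ss 0))}"
    proof (rule singleton_transport[of "st G" G \<eta> "st (track C ws ss)" \<theta>])
      show "st (track C ws ss) = {(ws ! 0, track_gen C ws ss 0)}"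
        by (simp add: track_simps track_gen_def ends)
    qed (use G in \<open>simp_all add: is_automaton_def aut_hom_def\<close>)
    show "ac G = {(last ws, \<theta> (last ws) (track_gen C ws ss (length ss)))}"
    proof (rule singleton_transport[of "ac G" G \<eta> "ac (track C ws ss)" \<theta>])
      show "ac (track C ws ss) = {(last ws, track_gen C ws ss (length ss))}"
        by (simp add: track_simps track_gen_def ends)
    qed (use G in \<open>simp_all add: is_automaton_def aut_hom_def\<close>)
    show "\<exists>t\<in>Xs (track C ws ss) U. \<theta> U t = x" if "x \<in> Xs G U" for U x
    proof
      show "\<eta> U x \<in> Xs (track C ws ss) U" using G(3) that by (simp add: aut_hom_def psh_hom_def)
    qed (use G(5) that in blast)
  qed
qed

lemma track_object_st: "track_object C G \<Longrightarrow> \<exists>s. st G = {(src G, s)}"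
  by (erule track_objectE) (simp add: src_def)

lemma track_object_ac: "track_object C G \<Longrightarrow> \<exists>a. ac G = {(tgt G, a)}"
  by (erule track_objectE) (simp add: tgt_def)

lemma track_object_connected:
  assumes cat: "is_cat C" and G: "track_object C G"
    and \<phi>: "psh_hom C G Y \<phi>" and P: "act_stable C Y P"
    and s: "(U0, s) \<in> st G" and x: "x \<in> Xs G U"
  shows "P U (\<phi> U x) \<longleftrightarrow> P U0 (\<phi> U0 s)"
proof -
  obtain ws ss \<theta> where path: "is_path C ws ss" and \<theta>: "psh_hom C (track C ws ss) G \<theta>"
    and st: "st G = {(ws ! 0, \<theta> (ws ! 0) (track_gen C ws ss 0))}"
    and onto: "\<And>U x. x \<in> Xs G U \<Longrightarrow> \<exists>t\<in>Xs (track C ws ss) U. \<theta> U t = x"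
    by (rule track_objectE[OF G]) (rule that)
  have conn: "P V (\<phi> V (\<theta> V t)) \<longleftrightarrow> P (ws ! 0) (\<phi> (ws ! 0) (\<theta> (ws ! 0) (track_gen C ws ss 0)))"
    if "t \<in> Xs (track C ws ss) V" for V t
    using track_connected[OF cat path psh_hom_comp[OF \<theta> \<phi>] P that] .
  obtain t where "t \<in> Xs (track C ws ss) U" "\<theta> U t = x" using onto[OF x] by blast
  then show ?thesis using conn s st by auto
qed

lemma Lang_memE:
  assumes "G \<in> Lang C X"
  obtains \<xi> s a where "track_object C G" "aut_hom C G X \<xi>"
    "st G = {(src G, s)}" "(src G, \<xi> (src G) s) \<in> st X"
    "ac G = {(tgt G, a)}" "(tgt G, \<xi> (tgt G) a) \<in> ac X"
proof -
  obtain \<xi> where G: "track_object C G" "aut_hom C G X \<xi>"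
    using assms unfolding Lang_def aut_le_def by blast
  obtain s a where sa: "st G = {(src G, s)}" "ac G = {(tgt G, a)}"
    using track_object_st[OF G(1)] track_object_ac[OF G(1)] by blast
  have "(src G, \<xi> (src G) s) \<in> st X" "(tgt G, \<xi> (tgt G) a) \<in> ac X"
    using G(2) sa unfolding aut_hom_def by auto
  with G sa that show thesis by blast
qed

lemma aut_hom_comp:
  "aut_hom C X Y \<eta> \<Longrightarrow> aut_hom C Y Z \<zeta> \<Longrightarrow> aut_hom C X Z (\<lambda>U x. \<zeta> U (\<eta> U x))"
  unfolding aut_hom_def using psh_hom_comp[of C X Y \<eta> Z \<zeta>] by fast

lemma Lang_mono_hom: "aut_hom C X Y \<eta> \<Longrightarrow> Lang C X \<subseteq> Lang C Y"
  unfolding Lang_def aut_le_def using aut_hom_comp by blast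

section \<open>Sums of diagrams\<close>

definition tag :: "bool \<Rightarrow> nat \<times> 'm \<Rightarrow> nat \<times> 'm" where
  "tag b x = (2 * fst x + of_bool b, snd x)"

lemma tag_eq_iff [simp]: "tag b x = tag b y \<longleftrightarrow> x = y"
  by (cases x, cases y) (auto simp: tag_def)

lemma tag_neq [simp]: "tag b x \<noteq> tag (\<not> b) y"
proof
  assume "tag b x = tag (\<not> b) y"
  then have "even (2 * fst x + of_bool b) = even (2 * fst y + of_bool (\<not> b))" by (simp add: tag_def)
  then show False by (cases b) simp_all
qed

lemma tag_image_eq_iff: "tag b ` c = tag b ` c' \<longleftrightarrow> c = c'"
  by (simp add: inj_image_eq_iff inj_on_def)

lemma tag_vimage_image [simp]: "tag b -` tag b ` c = c"
  by (simp add: inj_vimage_image_eq inj_def)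

lemma tag_image_neq: "c \<noteq> {} \<Longrightarrow> tag b ` c \<noteq> tag (\<not> b) ` c'"
  by (metis all_not_in_conv imageE imageI tag_neq)

lemma tag_precomp: "precomp C (tag b x) f = tag b (precomp C x f)"
  by (simp add: precomp_def tag_def)

definition diagram_sum :: "('o,'m,'z) cat_scheme \<Rightarrow> ('o,'m) diagram \<Rightarrow> ('o,'m) diagram \<Rightarrow>
    ('o,'m) diagram \<Rightarrow> bool \<Rightarrow> bool" where
  "diagram_sum C D D1 D2 b \<longleftrightarrow>
     (\<forall>U. colim_step C D U = map_prod (tag b) (tag b) ` colim_step C D1 U \<union>
                             map_prod (tag (\<not> b)) (tag (\<not> b)) ` colim_step C D2 U) \<and>
     (\<forall>U. colim_dom C D U = tag b ` colim_dom C D1 U \<union> tag (\<not> b) ` colim_dom C D2 U)"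

lemma diagram_sum_swap: "diagram_sum C D D1 D2 b \<Longrightarrow> diagram_sum C D D2 D1 (\<not> b)"
  unfolding diagram_sum_def by auto

lemma rtrancl_map_prod:
  assumes "(x, y) \<in> R\<^sup>*" "map_prod f f ` R \<subseteq> S"
  shows "(f x, f y) \<in> S\<^sup>*"
  using assms(1)
proof (induction rule: rtrancl_induct)
  case (step y z)
  have "(f y, f z) \<in> map_prod f f ` R" using step.hyps(2) by (rule rev_image_eqI) simp
  with step.IH assms(2) show ?case by (meson rtrancl.rtrancl_into_rtrancl subsetD)
qed simp

lemma rtrancl_tag_sum:
  assumes R: "R = map_prod (tag b) (tag b) ` R1 \<union> map_prod (tag (\<not> b)) (tag (\<not> b)) ` R2"
    and xz: "(tag b x, z) \<in> R\<^sup>*"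
  shows "\<exists>y. z = tag b y \<and> (x, y) \<in> R1\<^sup>*"
  using xz
proof (induction rule: rtrancl_induct)
  case (step z w)
  then obtain y where y: "z = tag b y" "(x, y) \<in> R1\<^sup>*" by blast
  from step.hyps(2) consider p where "p \<in> R1" "(z, w) = map_prod (tag b) (tag b) p"
    | p where "(z, w) = map_prod (tag (\<not> b)) (tag (\<not> b)) p"
    unfolding R by (metis UnE imageE)
  then show ?case
  proof cases
    case 1
    then have "(y, snd p) \<in> R1" "w = tag b (snd p)" using y(1) by (cases p; simp)+
    then show ?thesis using y(2) by (blast intro: rtrancl.rtrancl_into_rtrancl)
  next
    case 2
    then show ?thesis using y(1) by (cases p) simp
  qed
qed (rule exI[of _ x], simp)

lemma colim_sym_step_sum:
  assumes "diagram_sum C D D1 D2 b"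
  shows "colim_sym_step C D U = map_prod (tag b) (tag b) ` colim_sym_step C D1 U \<union>
                                map_prod (tag (\<not> b)) (tag (\<not> b)) ` colim_sym_step C D2 U"
proof -
  have conv: "(map_prod f f ` R)\<inverse> = map_prod f f ` R\<inverse>" for f :: "nat \<times> 'm \<Rightarrow> nat \<times> 'm" and R
    by force
  show ?thesis using assms unfolding diagram_sum_def by (simp add: converse_Un conv image_Un Un_ac)
qed

lemma colim_dom_tag:
  assumes "diagram_sum C D D1 D2 b"
  shows "tag b x \<in> colim_dom C D U \<longleftrightarrow> x \<in> colim_dom C D1 U"
  using assms unfolding diagram_sum_def by (auto simp: tag_neq[of "\<not> b", simplified])

lemma colim_eq_class_tag:
  assumes sum: "diagram_sum C D D1 D2 b"
  shows "colim_eq C D U `` {tag b x} = tag b ` (colim_eq C D1 U `` {x})"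
proof (intro set_eqI iffI)
  fix z assume "z \<in> colim_eq C D U `` {tag b x}"
  then have z: "(tag b x, z) \<in> (colim_sym_step C D U)\<^sup>*" "tag b x \<in> colim_dom C D U" "z \<in> colim_dom C D U"
    by (simp_all add: colim_eq_def)
  obtain y where y: "z = tag b y" "(x, y) \<in> (colim_sym_step C D1 U)\<^sup>*"
    using rtrancl_tag_sum[OF colim_sym_step_sum[OF sum] z(1)] by (elim exE conjE)
  have "x \<in> colim_dom C D1 U" "y \<in> colim_dom C D1 U"
    using z(2,3) colim_dom_tag[OF sum] y(1) by simp_all
  with y have "y \<in> colim_eq C D1 U `` {x}" by (simp add: colim_eq_def)
  then show "z \<in> tag b ` (colim_eq C D1 U `` {x})" using y(1) by blast
next
  fix z assume "z \<in> tag b ` (colim_eq C D1 U `` {x})"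
  then obtain y where y: "z = tag b y" "(x, y) \<in> (colim_sym_step C D1 U)\<^sup>*"
    "x \<in> colim_dom C D1 U" "y \<in> colim_dom C D1 U"
    by (auto simp: colim_eq_def)
  have "(tag b x, tag b y) \<in> (colim_sym_step C D U)\<^sup>*"
    by (rule rtrancl_map_prod[OF y(2)], subst colim_sym_step_sum[OF sum], rule Un_upper1)
  moreover have "tag b x \<in> colim_dom C D U" "tag b y \<in> colim_dom C D U"
    using y(3,4) colim_dom_tag[OF sum] by simp_all
  ultimately show "z \<in> colim_eq C D U `` {tag b x}" using y(1) by (simp add: colim_eq_def)
qed

lemma Xs_colim_tag:
  assumes "diagram_sum C D D1 D2 b" "c \<in> Xs (colim C D1) U"
  shows "tag b ` c \<in> Xs (colim C D) U"
proof -
  obtain x where x: "U \<in> obs C" "x \<in> colim_dom C D1 U" "c = colim_eq C D1 U `` {x}"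
    using assms(2) by (elim Xs_colimE)
  have "tag b ` c = colim_eq C D U `` {tag b x}"
    using colim_eq_class_tag[OF assms(1)] x(3) by simp
  moreover have "tag b x \<in> colim_dom C D U" using colim_dom_tag[OF assms(1)] x(2) by simp
  ultimately show ?thesis using class_in_Xs_colim[OF x(1)] by simp
qed

lemma Xs_colim_sumE:
  assumes sum: "diagram_sum C D D1 D2 b" and y: "y \<in> Xs (colim C D) U"
  obtains c where "c \<in> Xs (colim C D1) U" "y = tag b ` c"
    | c where "c \<in> Xs (colim C D2) U" "y = tag (\<not> b) ` c"
proof -
  obtain z where z: "U \<in> obs C" "z \<in> colim_dom C D U" "y = colim_eq C D U `` {z}"
    using y by (elim Xs_colimE)
  from z(2) sum consider x where "x \<in> colim_dom C D1 U" "z = tag b x"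
    | x where "x \<in> colim_dom C D2 U" "z = tag (\<not> b) x"
    unfolding diagram_sum_def by blast
  then show thesis
  proof cases
    case 1
    then have "y = tag b ` (colim_eq C D1 U `` {x})" using colim_eq_class_tag[OF sum] z(3) by simp
    then show thesis using that(1) class_in_Xs_colim[OF z(1) 1(1)] by blast
  next
    case 2
    then have "y = tag (\<not> b) ` (colim_eq C D2 U `` {x})"
      using colim_eq_class_tag[OF diagram_sum_swap[OF sum]] z(3) by simp
    then show thesis using that(2) class_in_Xs_colim[OF z(1) 2(1)] by blast
  qed
qed

lemma act_colim_tag:
  assumes sum: "diagram_sum C D D1 D2 b" and wf: "wf_diagram C D" "wf_diagram C D1"
    and cat: "is_cat C" and f: "f \<in> mors C" and c: "c \<in> Xs (colim C D1) (cd C f)"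
  shows "act (colim C D) f (tag b ` c) = tag b ` act (colim C D1) f c"
proof -
  obtain x where x: "x \<in> colim_dom C D1 (cd C f)" "c = colim_eq C D1 (cd C f) `` {x}"
    using c by (elim Xs_colimE)
  have "act (colim C D) f (tag b ` c) = act (colim C D) f (colim_eq C D (cd C f) `` {tag b x})"
    using colim_eq_class_tag[OF sum] x(2) by simp
  also have "\<dots> = colim_eq C D (dm C f) `` {tag b (precomp C x f)}"
    using act_colim_class[OF wf(1) cat _ mors_in_hom[OF f]] colim_dom_tag[OF sum] x(1)
    by (simp add: tag_precomp)
  also have "\<dots> = tag b ` act (colim C D1) f c"
    using colim_eq_class_tag[OF sum] act_colim_class[OF wf(2) cat x(1) mors_in_hom[OF f]] x(2) by simp
  finally show ?thesis .
qed

lemma psh_hom_colim_tag: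
  assumes "diagram_sum C D D1 D2 b" "wf_diagram C D" "wf_diagram C D1" "is_cat C"
  shows "psh_hom C (colim C D1) (colim C D) (\<lambda>U c. tag b ` c)"
  unfolding psh_hom_def using Xs_colim_tag[OF assms(1)] act_colim_tag[OF assms] by blast

lemma act_stable_summand:
  assumes sum: "diagram_sum C D D1 D2 b" and wf: "wf_diagram C D" "wf_diagram C D1" "wf_diagram C D2"
    and cat: "is_cat C"
  shows "act_stable C (colim C D) (\<lambda>U y. \<exists>c\<in>Xs (colim C D1) U. y = tag b ` c)"
  unfolding act_stable_def
proof (intro ballI)
  fix f y assume f: "f \<in> mors C" and y: "y \<in> Xs (colim C D) (cd C f)"
  from sum y show "(\<exists>c\<in>Xs (colim C D1) (dm C f). act (colim C D) f y = tag b ` c) \<longleftrightarrow>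
      (\<exists>c\<in>Xs (colim C D1) (cd C f). y = tag b ` c)"
  proof (cases rule: Xs_colim_sumE)
    case (1 c)
    then show ?thesis
      using act_colim_tag[OF sum wf(1,2) cat f] presheaf_act_in[OF is_presheaf_colim[OF wf(2) cat] f]
      by blast
  next
    case (2 c)
    then show ?thesis
      using act_colim_tag[OF diagram_sum_swap[OF sum] wf(1,3) cat f]
        presheaf_act_in[OF is_presheaf_colim[OF wf(3) cat] f] tag_image_neq Xs_colim_nonempty[OF wf(2) cat]
      by metis
  qed
qed

text \<open>The summand containing the image of the start element is stable under the action, so by
  connectedness it contains the image of the whole track object.\<close>

lemma track_object_factor_summand:
  assumes sum: "diagram_sum C D D1 D2 b" and wf: "wf_diagram C D" "wf_diagram C D1" "wf_diagram C D2"
    and cat: "is_cat C" and G: "track_object C G" and \<xi>: "psh_hom C G (colim C D) \<xi>"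
    and s: "(U0, s) \<in> st G" and c0: "c0 \<in> Xs (colim C D1) U0" and \<xi>s: "\<xi> U0 s = tag b ` c0"
  obtains \<zeta> where "psh_hom C G (colim C D1) \<zeta>" "\<And>U x. x \<in> Xs G U \<Longrightarrow> \<xi> U x = tag b ` \<zeta> U x"
proof -
  define \<zeta> where "\<zeta> U x = tag b -` \<xi> U x" for U x
  have summand: "\<exists>c\<in>Xs (colim C D1) U. \<xi> U x = tag b ` c" if "x \<in> Xs G U" for U x
    using track_object_connected[OF cat G \<xi> act_stable_summand[OF sum wf cat] s that] c0 \<xi>s by blast
  have \<zeta>: "\<zeta> U x \<in> Xs (colim C D1) U \<and> \<xi> U x = tag b ` \<zeta> U x" if "x \<in> Xs G U" for U x
    using summand[OF that] unfolding \<zeta>_def by auto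
  have "psh_hom C G (colim C D1) \<zeta>"
    unfolding psh_hom_def
  proof (intro conjI allI impI ballI)
    fix U x assume "x \<in> Xs G U"
    then show "\<zeta> U x \<in> Xs (colim C D1) U" using \<zeta> by blast
  next
    fix f x assume f: "f \<in> mors C" and x: "x \<in> Xs G (cd C f)"
    have "\<xi> (dm C f) (act G f x) = act (colim C D) f (\<xi> (cd C f) x)"
      using \<xi> f x unfolding psh_hom_def by blast
    also have "\<dots> = tag b ` act (colim C D1) f (\<zeta> (cd C f) x)"
      using \<zeta>[OF x] act_colim_tag[OF sum wf(1,2) cat f] by simp
    finally show "\<zeta> (dm C f) (act G f x) = act (colim C D1) f (\<zeta> (cd C f) x)"
      unfolding \<zeta>_def[of "dm C f"] by simp
  qed
  then show thesis using that \<zeta> by blast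
qed

section \<open>Sums of finite categories\<close>

text \<open>In the coproduct of two categories the objects and arrows of the summands become the even and
  odd numbers, matching \<open>tag\<close>.\<close>

definition interleave :: "(nat \<Rightarrow> 'a) \<Rightarrow> (nat \<Rightarrow> 'a) \<Rightarrow> nat \<Rightarrow> 'a" where
  "interleave F1 F2 n = (if even n then F1 (n div 2) else F2 (n div 2))"

definition cat_sum :: "(nat,nat) cat \<Rightarrow> (nat,nat) cat \<Rightarrow> (nat,nat) cat" where
  "cat_sum E1 E2 = \<lparr> obs = (\<lambda>n. 2 * n) ` obs E1 \<union> (\<lambda>n. Suc (2 * n)) ` obs E2,
     mors = (\<lambda>n. 2 * n) ` mors E1 \<union> (\<lambda>n. Suc (2 * n)) ` mors E2,
     dm = interleave (\<lambda>k. 2 * dm E1 k) (\<lambda>k. Suc (2 * dm E2 k)),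
     cd = interleave (\<lambda>k. 2 * cd E1 k) (\<lambda>k. Suc (2 * cd E2 k)),
     cmp = (\<lambda>g f. interleave (\<lambda>k. 2 * cmp E1 k (f div 2)) (\<lambda>k. Suc (2 * cmp E2 k (f div 2))) g),
     idt = interleave (\<lambda>e. 2 * idt E1 e) (\<lambda>e. Suc (2 * idt E2 e)) \<rparr>"

lemma interleave_simps [simp]: "interleave F1 F2 (2 * k) = F1 k" "interleave F1 F2 (Suc (2 * k)) = F2 k"
  by (simp_all add: interleave_def)

lemma cat_sum_simps [simp]:
  "2 * k \<in> obs (cat_sum E1 E2) \<longleftrightarrow> k \<in> obs E1" "Suc (2 * k) \<in> obs (cat_sum E1 E2) \<longleftrightarrow> k \<in> obs E2"
  "2 * k \<in> mors (cat_sum E1 E2) \<longleftrightarrow> k \<in> mors E1" "Suc (2 * k) \<in> mors (cat_sum E1 E2) \<longleftrightarrow> k \<in> mors E2"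
  "dm (cat_sum E1 E2) (2 * k) = 2 * dm E1 k" "dm (cat_sum E1 E2) (Suc (2 * k)) = Suc (2 * dm E2 k)"
  "cd (cat_sum E1 E2) (2 * k) = 2 * cd E1 k" "cd (cat_sum E1 E2) (Suc (2 * k)) = Suc (2 * cd E2 k)"
  "cmp (cat_sum E1 E2) (2 * k) (2 * j) = 2 * cmp E1 k j"
  "cmp (cat_sum E1 E2) (Suc (2 * k)) (Suc (2 * j)) = Suc (2 * cmp E2 k j)"
  "idt (cat_sum E1 E2) (2 * k) = 2 * idt E1 k" "idt (cat_sum E1 E2) (Suc (2 * k)) = Suc (2 * idt E2 k)"
  by (auto simp: cat_sum_def Suc_double_not_eq_double double_not_eq_Suc_double)

lemma cat_sum_obsE:
  assumes "e \<in> obs (cat_sum E1 E2)"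
  obtains k where "e = 2 * k" "k \<in> obs E1" | k where "e = Suc (2 * k)" "k \<in> obs E2"
  using assms by (auto simp: cat_sum_def)

lemma cat_sum_morsE:
  assumes "f \<in> mors (cat_sum E1 E2)"
  obtains k where "f = 2 * k" "k \<in> mors E1" | k where "f = Suc (2 * k)" "k \<in> mors E2"
  using assms by (auto simp: cat_sum_def)

lemma finite_cat_sum:
  "finite (obs E1) \<Longrightarrow> finite (obs E2) \<Longrightarrow> finite (obs (cat_sum E1 E2))"
  "finite (mors E1) \<Longrightarrow> finite (mors E2) \<Longrightarrow> finite (mors (cat_sum E1 E2))"
  by (simp_all add: cat_sum_def)

lemmas parity_neq = Suc_double_not_eq_double double_not_eq_Suc_double

lemma is_cat_cat_sum:
  assumes "is_cat E1" "is_cat E2"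
  shows "is_cat (cat_sum E1 E2)"
  unfolding is_cat_def
proof (intro conjI ballI impI)
  fix f assume "f \<in> mors (cat_sum E1 E2)"
  then show "dm (cat_sum E1 E2) f \<in> obs (cat_sum E1 E2)" "cd (cat_sum E1 E2) f \<in> obs (cat_sum E1 E2)"
    using assms by (elim cat_sum_morsE; simp add: is_cat_def)+
next
  fix U assume "U \<in> obs (cat_sum E1 E2)"
  then show "idt (cat_sum E1 E2) U \<in> hom (cat_sum E1 E2) U U"
    using assms by (elim cat_sum_obsE) (auto simp: is_cat_def hom_def)
next
  fix f assume "f \<in> mors (cat_sum E1 E2)"
  then show "cmp (cat_sum E1 E2) f (idt (cat_sum E1 E2) (dm (cat_sum E1 E2) f)) = f"
    "cmp (cat_sum E1 E2) (idt (cat_sum E1 E2) (cd (cat_sum E1 E2) f)) f = f"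
    using assms by (elim cat_sum_morsE; simp add: is_cat_def)+
next
  fix f g assume "f \<in> mors (cat_sum E1 E2)" "g \<in> mors (cat_sum E1 E2)"
    "dm (cat_sum E1 E2) g = cd (cat_sum E1 E2) f"
  then show "cmp (cat_sum E1 E2) g f \<in> hom (cat_sum E1 E2) (dm (cat_sum E1 E2) f) (cd (cat_sum E1 E2) g)"
    using assms by (elim cat_sum_morsE) (auto simp: is_cat_def hom_def parity_neq)
next
  fix f g h assume "f \<in> mors (cat_sum E1 E2)" "g \<in> mors (cat_sum E1 E2)" "h \<in> mors (cat_sum E1 E2)"
    "dm (cat_sum E1 E2) g = cd (cat_sum E1 E2) f" "dm (cat_sum E1 E2) h = cd (cat_sum E1 E2) g"
  then show "cmp (cat_sum E1 E2) h (cmp (cat_sum E1 E2) g f) = cmp (cat_sum E1 E2) (cmp (cat_sum E1 E2) h g) f"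
    using assms by (elim cat_sum_morsE) (auto simp: is_cat_def hom_def parity_neq)
qed

lemma is_functor_cat_sum:
  assumes "is_functor E1 C Gob1 Gmor1" "is_functor E2 C Gob2 Gmor2"
  shows "is_functor (cat_sum E1 E2) C (interleave Gob1 Gob2) (interleave Gmor1 Gmor2)"
  unfolding is_functor_def
proof (intro conjI ballI impI)
  fix e assume "e \<in> obs (cat_sum E1 E2)"
  then show "interleave Gob1 Gob2 e \<in> obs C"
    using assms by (elim cat_sum_obsE) (simp_all add: is_functor_def)
next
  fix a assume "a \<in> mors (cat_sum E1 E2)"
  then show "interleave Gmor1 Gmor2 a \<in> hom C (interleave Gob1 Gob2 (dm (cat_sum E1 E2) a))
      (interleave Gob1 Gob2 (cd (cat_sum E1 E2) a))"
    using assms by (elim cat_sum_morsE) (simp_all add: is_functor_def)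
next
  fix e assume "e \<in> obs (cat_sum E1 E2)"
  then show "interleave Gmor1 Gmor2 (idt (cat_sum E1 E2) e) = idt C (interleave Gob1 Gob2 e)"
    using assms by (elim cat_sum_obsE) (simp_all add: is_functor_def)
next
  fix a b assume "a \<in> mors (cat_sum E1 E2)" "b \<in> mors (cat_sum E1 E2)"
    "dm (cat_sum E1 E2) b = cd (cat_sum E1 E2) a"
  then show "interleave Gmor1 Gmor2 (cmp (cat_sum E1 E2) b a) =
      cmp C (interleave Gmor1 Gmor2 b) (interleave Gmor1 Gmor2 a)"
    using assms by (elim cat_sum_morsE) (auto simp: is_functor_def parity_neq)
qed

lemma wf_functor_diagram:
  assumes "is_cat E" "is_functor E C Gob Gmor"
  shows "wf_diagram C (functor_diagram E Gob Gmor)"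
  using assms unfolding wf_diagram_def functor_diagram_def is_cat_def is_functor_def by auto

lemma colim_step_cat_sum:
  "colim_step C (functor_diagram (cat_sum E1 E2) (interleave Gob1 Gob2) (interleave Gmor1 Gmor2)) U =
    map_prod (tag False) (tag False) ` colim_step C (functor_diagram E1 Gob1 Gmor1) U \<union>
    map_prod (tag True) (tag True) ` colim_step C (functor_diagram E2 Gob2 Gmor2) U"
  (is "?S = ?S1 \<union> ?S2")
proof (intro equalityI subsetI)
  fix p assume "p \<in> ?S"
  then obtain a h where "a \<in> mors (cat_sum E1 E2)" "h \<in> hom C U (interleave Gob1 Gob2 (dm (cat_sum E1 E2) a))"
    "p = ((dm (cat_sum E1 E2) a, h), (cd (cat_sum E1 E2) a, cmp C (interleave Gmor1 Gmor2 a) h))"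
    by (auto simp: colim_step_def functor_diagram_def)
  then show "p \<in> ?S1 \<union> ?S2"
    by (elim cat_sum_morsE) (auto simp: colim_step_def functor_diagram_def tag_def image_iff)
next
  fix p assume "p \<in> ?S1 \<union> ?S2"
  then show "p \<in> ?S"
  proof
    assume "p \<in> ?S1"
    then obtain k h where "k \<in> mors E1" "h \<in> hom C U (Gob1 (dm E1 k))"
      "p = ((2 * dm E1 k, h), (2 * cd E1 k, cmp C (Gmor1 k) h))"
      by (auto simp: colim_step_def functor_diagram_def tag_def)
    then show "p \<in> ?S"
      unfolding colim_step_def functor_diagram_def by (auto intro!: exI[of _ "2 * k"])
  next
    assume "p \<in> ?S2"
    then obtain k h where "k \<in> mors E2" "h \<in> hom C U (Gob2 (dm E2 k))"
      "p = ((Suc (2 * dm E2 k), h), (Suc (2 * cd E2 k), cmp C (Gmor2 k) h))"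
      by (auto simp: colim_step_def functor_diagram_def tag_def)
    then show "p \<in> ?S"
      unfolding colim_step_def functor_diagram_def by (auto intro!: exI[of _ "Suc (2 * k)"])
  qed
qed

lemma colim_dom_cat_sum:
  "colim_dom C (functor_diagram (cat_sum E1 E2) (interleave Gob1 Gob2) (interleave Gmor1 Gmor2)) U =
    tag False ` colim_dom C (functor_diagram E1 Gob1 Gmor1) U \<union>
    tag True ` colim_dom C (functor_diagram E2 Gob2 Gmor2) U"
  by (auto simp: colim_dom_def functor_diagram_def tag_def image_iff elim!: cat_sum_obsE)

lemma diagram_sum_cat_sum:
  "diagram_sum C (functor_diagram (cat_sum E1 E2) (interleave Gob1 Gob2) (interleave Gmor1 Gmor2))
     (functor_diagram E1 Gob1 Gmor1) (functor_diagram E2 Gob2 Gmor2) False"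
  unfolding diagram_sum_def by (simp add: colim_step_cat_sum colim_dom_cat_sum)

section \<open>Regular languages are closed under finite unions\<close>

definition tagged_elems :: "bool \<Rightarrow> ('o \<Rightarrow> 'x \<Rightarrow> (nat \<times> 'm) set) \<Rightarrow> ('o \<times> 'x) set \<Rightarrow>
    ('o \<times> (nat \<times> 'm) set) set" where
  "tagged_elems b \<eta> S = (\<lambda>(U, x). (U, tag b ` \<eta> U x)) ` S"

text \<open>Given presentations \<open>\<eta>\<^sub>i\<close> of \<open>X\<^sub>i\<close> as colimits, the coproduct \<open>X\<^sub>1 + X\<^sub>2\<close>, presented as the
  colimit of the sum diagram.\<close>

definition aut_sum :: "('o,'m,'z) cat_scheme \<Rightarrow> ('o,'m) diagram \<Rightarrow> bool \<Rightarrow>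
    ('o,'m,'x) aut \<Rightarrow> ('o \<Rightarrow> 'x \<Rightarrow> (nat \<times> 'm) set) \<Rightarrow>
    ('o,'m,'y) aut \<Rightarrow> ('o \<Rightarrow> 'y \<Rightarrow> (nat \<times> 'm) set) \<Rightarrow> ('o,'m) tobj" where
  "aut_sum C D b X1 \<eta>1 X2 \<eta>2 = (colim C D)\<lparr>
     st := tagged_elems b \<eta>1 (st X1) \<union> tagged_elems (\<not> b) \<eta>2 (st X2),
     ac := tagged_elems b \<eta>1 (ac X1) \<union> tagged_elems (\<not> b) \<eta>2 (ac X2) \<rparr>"

lemma aut_sum_simps:
  "Xs (aut_sum C D b X1 \<eta>1 X2 \<eta>2) = Xs (colim C D)"
  "act (aut_sum C D b X1 \<eta>1 X2 \<eta>2) = act (colim C D)"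
  "st (aut_sum C D b X1 \<eta>1 X2 \<eta>2) = tagged_elems b \<eta>1 (st X1) \<union> tagged_elems (\<not> b) \<eta>2 (st X2)"
  "ac (aut_sum C D b X1 \<eta>1 X2 \<eta>2) = tagged_elems b \<eta>1 (ac X1) \<union> tagged_elems (\<not> b) \<eta>2 (ac X2)"
  by (simp_all add: aut_sum_def colim_def)

lemma aut_sum_swap: "aut_sum C D b X1 \<eta>1 X2 \<eta>2 = aut_sum C D (\<not> b) X2 \<eta>2 X1 \<eta>1"
  unfolding aut_sum_def by (simp add: Un_commute)

lemma aut_hom_aut_sum:
  assumes sum: "diagram_sum C D D1 D2 b" and wf: "wf_diagram C D" "wf_diagram C D1"
    and cat: "is_cat C" and \<eta>1: "psh_hom C X1 (colim C D1) \<eta>1"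
  shows "aut_hom C X1 (aut_sum C D b X1 \<eta>1 X2 \<eta>2) (\<lambda>U x. tag b ` \<eta>1 U x)"
  using psh_hom_comp[OF \<eta>1 psh_hom_colim_tag[OF sum wf cat]]
  unfolding aut_hom_def psh_hom_def by (auto simp: aut_sum_simps tagged_elems_def)

lemma Lang_aut_sum_start:
  assumes sum: "diagram_sum C D D1 D2 b" and wf: "wf_diagram C D" "wf_diagram C D1" "wf_diagram C D2"
    and cat: "is_cat C" and aut1: "is_automaton C X1"
    and \<eta>1: "psh_hom C X1 (colim C D1) \<eta>1" and \<theta>1: "psh_hom C (colim C D1) X1 \<theta>1"
    and inv1: "\<forall>U x. x \<in> Xs X1 U \<longrightarrow> \<theta>1 U (\<eta>1 U x) = x"
    and G: "track_object C G" and \<xi>: "aut_hom C G (aut_sum C D b X1 \<eta>1 X2 \<eta>2) \<xi>"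
    and s: "(U0, s) \<in> st G" and x0: "(U0, x0) \<in> st X1" and \<xi>s: "\<xi> U0 s = tag b ` \<eta>1 U0 x0"
  shows "G \<in> Lang C X1"
proof -
  have "x0 \<in> Xs X1 U0" using aut1 x0 unfolding is_automaton_def elems_def by auto
  then have c0: "\<eta>1 U0 x0 \<in> Xs (colim C D1) U0" using \<eta>1 unfolding psh_hom_def by blast
  have \<xi>': "psh_hom C G (colim C D) \<xi>"
    using \<xi> unfolding aut_hom_def psh_hom_def by (simp add: aut_sum_simps)
  obtain \<zeta> where \<zeta>: "psh_hom C G (colim C D1) \<zeta>" and \<xi>\<zeta>: "\<And>U x. x \<in> Xs G U \<Longrightarrow> \<xi> U x = tag b ` \<zeta> U x"
    using track_object_factor_summand[OF sum wf cat G \<xi>' s c0 \<xi>s] by blast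
  have preserved: "(U, \<theta>1 U (\<zeta> U x)) \<in> S1"
    if "(U, \<xi> U x) \<in> tagged_elems b \<eta>1 S1 \<union> tagged_elems (\<not> b) \<eta>2 S2" "(U, x) \<in> elems G"
      "S1 \<subseteq> elems X1" for U x S1 S2
  proof -
    have x: "x \<in> Xs G U" using that(2) by (simp add: elems_def)
    have "\<zeta> U x \<noteq> {}" using \<zeta> x Xs_colim_nonempty[OF wf(2) cat] unfolding psh_hom_def by blast
    have "(U, tag b ` \<zeta> U x) \<in> tagged_elems b \<eta>1 S1 \<union> tagged_elems (\<not> b) \<eta>2 S2"
      using that(1) \<xi>\<zeta>[OF x] by simp
    then consider x1 where "(U, x1) \<in> S1" "tag b ` \<zeta> U x = tag b ` \<eta>1 U x1"
      | x2 where "tag b ` \<zeta> U x = tag (\<not> b) ` \<eta>2 U x2"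
      unfolding tagged_elems_def by auto
    then obtain x1 where "(U, x1) \<in> S1" "\<zeta> U x = \<eta>1 U x1"
      using tag_image_neq[OF \<open>\<zeta> U x \<noteq> {}\<close>] by (metis tag_image_eq_iff)
    moreover have "x1 \<in> Xs X1 U" using \<open>(U, x1) \<in> S1\<close> that(3) by (auto simp: elems_def)
    ultimately show ?thesis using inv1 by simp
  qed
  have "aut_hom C G X1 (\<lambda>U x. \<theta>1 U (\<zeta> U x))"
    unfolding aut_hom_def
  proof (intro conjI)
    show "psh_hom C G X1 (\<lambda>U x. \<theta>1 U (\<zeta> U x))" using psh_hom_comp[OF \<zeta> \<theta>1] .
    have "st G \<subseteq> elems G" "ac G \<subseteq> elems G" "st X1 \<subseteq> elems X1" "ac X1 \<subseteq> elems X1"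
      using G aut1 by (auto simp: track_object_def is_automaton_def)
    then show "\<forall>(U, x)\<in>st G. (U, \<theta>1 U (\<zeta> U x)) \<in> st X1" "\<forall>(U, x)\<in>ac G. (U, \<theta>1 U (\<zeta> U x)) \<in> ac X1"
      using \<xi> preserved unfolding aut_hom_def aut_sum_simps by blast+
  qed
  then show ?thesis using G unfolding Lang_def aut_le_def by blast
qed

lemma fin_gen_cong:
  assumes "Xs Y = Xs X" "act Y = act X" "fin_gen C X"
  shows "fin_gen C Y"
  using assms unfolding fin_gen_def psh_iso_def psh_hom_def by simp

lemma fin_gen_colim_functor:
  fixes E :: "(nat,nat) cat"
  assumes "is_cat E" "finite (obs E)" "finite (mors E)" "is_functor E C Gob Gmor"
  shows "fin_gen C (colim C (functor_diagram E Gob Gmor))"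
proof -
  have "psh_iso C (colim C (functor_diagram E Gob Gmor)) (colim C (functor_diagram E Gob Gmor))"
    unfolding psh_iso_def psh_hom_def by (rule exI[of _ "\<lambda>U x. x"], rule exI[of _ "\<lambda>U x. x"]) simp
  then show ?thesis using assms unfolding fin_gen_def by blast
qed

lemma finite_typeE:
  fixes X :: "('o,'m,'x) aut"
  assumes "finite_type C X"
  obtains E :: "(nat,nat) cat" and Gob Gmor \<eta> \<theta> where
    "is_cat E" "finite (obs E)" "finite (mors E)" "is_functor E C Gob Gmor"
    "psh_hom C X (colim C (functor_diagram E Gob Gmor)) \<eta>"
    "psh_hom C (colim C (functor_diagram E Gob Gmor)) X \<theta>"
    "\<forall>U x. x \<in> Xs X U \<longrightarrow> \<theta> U (\<eta> U x) = x"
proof -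
  obtain E :: "(nat,nat) cat" and Gob Gmor where E: "is_cat E" "finite (obs E)" "finite (mors E)"
    "is_functor E C Gob Gmor" "psh_iso C X (colim C (functor_diagram E Gob Gmor))"
    using assms unfolding finite_type_def fin_gen_def by (elim conjE exE)
  from E(5) obtain \<eta> \<theta> where "psh_hom C X (colim C (functor_diagram E Gob Gmor)) \<eta>"
    "psh_hom C (colim C (functor_diagram E Gob Gmor)) X \<theta>" "\<forall>U x. x \<in> Xs X U \<longrightarrow> \<theta> U (\<eta> U x) = x"
    unfolding psh_iso_def by (elim conjE exE)
  with E(1-4) show thesis by (rule that)
qed

lemma finite_type_aut_sum:
  assumes sum: "diagram_sum C D D1 D2 b" and wf: "wf_diagram C D" and cat: "is_cat C"
    and fg: "fin_gen C (colim C D)" and ft: "finite_type C X1" "finite_type C X2"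
    and \<eta>: "psh_hom C X1 (colim C D1) \<eta>1" "psh_hom C X2 (colim C D2) \<eta>2"
  shows "finite_type C (aut_sum C D b X1 \<eta>1 X2 \<eta>2)"
proof -
  let ?X = "aut_sum C D b X1 \<eta>1 X2 \<eta>2"
  have tagged: "tagged_elems b' \<eta>' S \<subseteq> elems ?X"
    if "S \<subseteq> elems X'" "psh_hom C X' (colim C D') \<eta>'" "diagram_sum C D D' D'' b'" for b' \<eta>' S X' D' D''
    using that Xs_colim_tag unfolding tagged_elems_def elems_def psh_hom_def aut_sum_simps by fast
  have "is_presheaf C ?X"
    using is_presheaf_colim[OF wf cat] unfolding is_presheaf_def aut_sum_simps .
  moreover have "st ?X \<subseteq> elems ?X" "ac ?X \<subseteq> elems ?X"
    using ft tagged[OF _ \<eta>(1) sum] tagged[OF _ \<eta>(2) diagram_sum_swap[OF sum]]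
    unfolding aut_sum_simps finite_type_def is_automaton_def by blast+
  moreover have "fin_gen C ?X" using fin_gen_cong[OF aut_sum_simps(1,2) fg] .
  moreover have "finite (st ?X)" "finite (ac ?X)"
    using ft unfolding aut_sum_simps tagged_elems_def finite_type_def by auto
  ultimately show ?thesis unfolding finite_type_def is_automaton_def by blast
qed

lemma Lang_aut_sum:
  assumes sum: "diagram_sum C D D1 D2 b" and wf: "wf_diagram C D" "wf_diagram C D1" "wf_diagram C D2"
    and cat: "is_cat C" and aut: "is_automaton C X1" "is_automaton C X2"
    and \<eta>1: "psh_hom C X1 (colim C D1) \<eta>1" and \<theta>1: "psh_hom C (colim C D1) X1 \<theta>1"
    and inv1: "\<forall>U x. x \<in> Xs X1 U \<longrightarrow> \<theta>1 U (\<eta>1 U x) = x"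
    and \<eta>2: "psh_hom C X2 (colim C D2) \<eta>2" and \<theta>2: "psh_hom C (colim C D2) X2 \<theta>2"
    and inv2: "\<forall>U x. x \<in> Xs X2 U \<longrightarrow> \<theta>2 U (\<eta>2 U x) = x"
  shows "Lang C (aut_sum C D b X1 \<eta>1 X2 \<eta>2) = Lang C X1 \<union> Lang C X2"
proof
  have sum': "diagram_sum C D D2 D1 (\<not> b)" using diagram_sum_swap[OF sum] .
  show "Lang C X1 \<union> Lang C X2 \<subseteq> Lang C (aut_sum C D b X1 \<eta>1 X2 \<eta>2)"
    using Lang_mono_hom[OF aut_hom_aut_sum[OF sum wf(1,2) cat \<eta>1]]
      Lang_mono_hom[OF aut_hom_aut_sum[OF sum' wf(1,3) cat \<eta>2, of X1 \<eta>1]]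
    unfolding aut_sum_swap[of C D b X1 \<eta>1 X2 \<eta>2, symmetric] by blast
  show "Lang C (aut_sum C D b X1 \<eta>1 X2 \<eta>2) \<subseteq> Lang C X1 \<union> Lang C X2"
  proof
    fix G assume "G \<in> Lang C (aut_sum C D b X1 \<eta>1 X2 \<eta>2)"
    then obtain \<xi> s where G: "track_object C G" "aut_hom C G (aut_sum C D b X1 \<eta>1 X2 \<eta>2) \<xi>"
      and s: "st G = {(src G, s)}" "(src G, \<xi> (src G) s) \<in> st (aut_sum C D b X1 \<eta>1 X2 \<eta>2)"
      by (elim Lang_memE)
    from s(2) consider x0 where "(src G, x0) \<in> st X1" "\<xi> (src G) s = tag b ` \<eta>1 (src G) x0"
      | x0 where "(src G, x0) \<in> st X2" "\<xi> (src G) s = tag (\<not> b) ` \<eta>2 (src G) x0"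
      unfolding aut_sum_simps tagged_elems_def by auto
    then show "G \<in> Lang C X1 \<union> Lang C X2"
    proof cases
      case 1
      then show ?thesis using Lang_aut_sum_start[OF sum wf cat aut(1) \<eta>1 \<theta>1 inv1 G] s(1) by blast
    next
      case 2
      have "aut_hom C G (aut_sum C D (\<not> b) X2 \<eta>2 X1 \<eta>1) \<xi>"
        using G(2) unfolding aut_sum_swap[of C D b X1 \<eta>1 X2 \<eta>2] .
      moreover have "(src G, s) \<in> st G" using s(1) by simp
      ultimately have "G \<in> Lang C X2"
        by (rule Lang_aut_sum_start[OF sum' wf(1,3,2) cat aut(2) \<eta>2 \<theta>2 inv2 G(1)]) (use 2 in simp_all)
      then show ?thesis by blast
    qed
  qed
qed

lemma regular_Un:
  fixes C :: "('o,'m,'z) dcat_scheme"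
  assumes cat: "is_cat C" and "regular C L1" "regular C L2"
  shows "regular C (L1 \<union> L2)"
proof -
  obtain X1 X2 :: "('o,'m) tobj" where X: "finite_type C X1" "finite_type C X2" "L1 = Lang C X1" "L2 = Lang C X2"
    using assms(2,3) unfolding regular_def by blast
  obtain E1 :: "(nat,nat) cat" and Gob1 Gmor1 \<eta>1 \<theta>1 where E1: "is_cat E1" "finite (obs E1)" "finite (mors E1)"
    "is_functor E1 C Gob1 Gmor1" and i1: "psh_hom C X1 (colim C (functor_diagram E1 Gob1 Gmor1)) \<eta>1"
    "psh_hom C (colim C (functor_diagram E1 Gob1 Gmor1)) X1 \<theta>1" "\<forall>U x. x \<in> Xs X1 U \<longrightarrow> \<theta>1 U (\<eta>1 U x) = x"
    using X(1) by (elim finite_typeE)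
  obtain E2 :: "(nat,nat) cat" and Gob2 Gmor2 \<eta>2 \<theta>2 where E2: "is_cat E2" "finite (obs E2)" "finite (mors E2)"
    "is_functor E2 C Gob2 Gmor2" and i2: "psh_hom C X2 (colim C (functor_diagram E2 Gob2 Gmor2)) \<eta>2"
    "psh_hom C (colim C (functor_diagram E2 Gob2 Gmor2)) X2 \<theta>2" "\<forall>U x. x \<in> Xs X2 U \<longrightarrow> \<theta>2 U (\<eta>2 U x) = x"
    using X(2) by (elim finite_typeE)
  define D where "D = functor_diagram (cat_sum E1 E2) (interleave Gob1 Gob2) (interleave Gmor1 Gmor2)"
  have E: "is_cat (cat_sum E1 E2)" "finite (obs (cat_sum E1 E2))" "finite (mors (cat_sum E1 E2))"
    "is_functor (cat_sum E1 E2) C (interleave Gob1 Gob2) (interleave Gmor1 Gmor2)"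
    using is_cat_cat_sum[OF E1(1) E2(1)] finite_cat_sum E1(2,3) E2(2,3) is_functor_cat_sum[OF E1(4) E2(4)]
    by simp_all
  have sum: "diagram_sum C D (functor_diagram E1 Gob1 Gmor1) (functor_diagram E2 Gob2 Gmor2) False"
    unfolding D_def by (rule diagram_sum_cat_sum)
  have wf: "wf_diagram C D" "wf_diagram C (functor_diagram E1 Gob1 Gmor1)"
    "wf_diagram C (functor_diagram E2 Gob2 Gmor2)"
    unfolding D_def using wf_functor_diagram E E1(1,4) E2(1,4) by blast+
  have "finite_type C (aut_sum C D False X1 \<eta>1 X2 \<eta>2)"
    using finite_type_aut_sum[OF sum wf(1) cat _ X(1,2) i1(1) i2(1)] fin_gen_colim_functor[OF E]
    unfolding D_def by blast
  moreover have "Lang C (aut_sum C D False X1 \<eta>1 X2 \<eta>2) = L1 \<union> L2"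
    using Lang_aut_sum[OF sum wf cat _ _ i1 i2] X unfolding finite_type_def by blast
  ultimately show ?thesis unfolding regular_def by blast
qed

definition empty_cat :: "(nat,nat) cat" where
  "empty_cat = \<lparr> obs = {}, mors = {}, dm = id, cd = id, cmp = (\<lambda>g f. g), idt = id \<rparr>"

lemma regular_empty:
  fixes C :: "('o,'m,'z) dcat_scheme"
  assumes cat: "is_cat C"
  shows "regular C {}"
proof -
  define D where "D = functor_diagram empty_cat (\<lambda>_. undefined :: 'o) (\<lambda>_. undefined :: 'm)"
  have E: "is_cat empty_cat" "finite (obs empty_cat)" "finite (mors empty_cat)"
    "is_functor empty_cat C (\<lambda>_. undefined) (\<lambda>_. undefined)"
    by (simp_all add: empty_cat_def is_cat_def is_functor_def)
  have "wf_diagram C D" unfolding D_def using wf_functor_diagram E by blast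
  then have "finite_type C (colim C D)"
    using is_presheaf_colim[OF _ cat] fin_gen_colim_functor[OF E]
    by (simp add: finite_type_def is_automaton_def colim_def D_def)
  moreover have "Lang C (colim C D) = {}"
    by (auto simp: colim_def elim: Lang_memE)
  ultimately show ?thesis unfolding regular_def by blast
qed

lemma regular_UN:
  fixes C :: "('o,'m,'z) dcat_scheme"
  assumes "is_cat C" "finite S" "\<And>p. p \<in> S \<Longrightarrow> regular C (F p)"
  shows "regular C (\<Union>p\<in>S. F p)"
  using assms(2,3) by (induction S rule: finite_induct) (simp_all add: regular_empty regular_Un assms(1))

section \<open>Restricting start and accept objects\<close>

lemma regular_sub_lang_Lang:
  fixes X :: "('o,'m) tobj"
  assumes ft: "finite_type C X"
  shows "regular C (sub_lang (Lang C X) U V)"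
proof -
  define X' where "X' = X\<lparr> st := {e \<in> st X. fst e = U}, ac := {e \<in> ac X. fst e = V} \<rparr>"
  have X': "Xs X' = Xs X" "act X' = act X" "st X' = {e \<in> st X. fst e = U}" "ac X' = {e \<in> ac X. fst e = V}"
    by (simp_all add: X'_def)
  have "finite_type C X'"
    using ft fin_gen_cong[OF X'(1,2)]
    unfolding finite_type_def is_automaton_def is_presheaf_def elems_def X' by auto
  moreover have "Lang C X' = sub_lang (Lang C X) U V"
  proof (intro set_eqI iffI)
    fix G assume "G \<in> Lang C X'"
    then obtain \<xi> where G: "track_object C G" "aut_hom C G X' \<xi>" "src G = U" "tgt G = V"
      by (elim Lang_memE) (auto simp: X')
    then have "aut_hom C G X \<xi>" unfolding aut_hom_def psh_hom_def X' by auto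
    then show "G \<in> sub_lang (Lang C X) U V"
      using G unfolding sub_lang_def Lang_def aut_le_def by blast
  next
    fix G assume "G \<in> sub_lang (Lang C X) U V"
    then obtain \<xi> s a where G: "track_object C G" "aut_hom C G X \<xi>" "src G = U" "tgt G = V"
      "st G = {(src G, s)}" "ac G = {(tgt G, a)}"
      unfolding sub_lang_def by (elim CollectE conjE Lang_memE) blast
    then have "aut_hom C G X' \<xi>" unfolding aut_hom_def psh_hom_def X' by auto
    then show "G \<in> Lang C X'" using G unfolding Lang_def aut_le_def by blast
  qed
  ultimately show ?thesis unfolding regular_def by blast
qed

lemma src_Lang_subset: "src ` Lang C X \<subseteq> fst ` st X"
  by (auto elim!: Lang_memE intro: rev_image_eqI)

lemma tgt_Lang_subset: "tgt ` Lang C X \<subseteq> fst ` ac X"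
  by (auto elim!: Lang_memE intro: rev_image_eqI)

lemma Union_sub_lang: "(\<Union>(U, V)\<in>src ` L \<times> tgt ` L. sub_lang L U V) = L"
  unfolding sub_lang_def by auto

theorem lemma11:
  fixes C :: "('o,'m) dcat" and L :: "('o,'m) tobj set"
  assumes "is_dcat C" and "is_language C L"
  shows "regular C L \<longleftrightarrow>
           finite (src ` L) \<and> finite (tgt ` L) \<and>
           (\<forall>U\<in>src ` L. \<forall>V\<in>tgt ` L. regular C (sub_lang L U V))"
proof
  assume "regular C L"
  then obtain X :: "('o,'m) tobj" where X: "finite_type C X" "L = Lang C X"
    unfolding regular_def by blast
  then have "finite (fst ` st X)" "finite (fst ` ac X)" unfolding finite_type_def by auto
  then show "finite (src ` L) \<and> finite (tgt ` L) \<and> (\<forall>U\<in>src ` L. \<forall>V\<in>tgt ` L. regular C (sub_lang L U V))"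
    using X regular_sub_lang_Lang src_Lang_subset tgt_Lang_subset finite_subset by metis
next
  assume "finite (src ` L) \<and> finite (tgt ` L) \<and> (\<forall>U\<in>src ` L. \<forall>V\<in>tgt ` L. regular C (sub_lang L U V))"
  moreover have "is_cat C" using assms(1) unfolding is_dcat_def by blast
  ultimately have "regular C (\<Union>(U, V)\<in>src ` L \<times> tgt ` L. sub_lang L U V)"
    by (intro regular_UN) auto
  then show "regular C L" by (simp only: Union_sub_lang)
qed

end
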